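(* Let $M=M(S^2;\frac{q_1}{p_1},\frac{q_2}{p_2},\frac{q_3}{p_3})$ with $e(M)\neq0$. If every element of $H_1(M,\mathbb{Z})$ has order dividing $2$, or if $p_1,p_2,p_3$ are weakly coprime, then $M$ has no exceptional abelian characters, i.e. $x_M=0$.
   Context: $M(S^2;\frac{q_1}{p_1},\frac{q_2}{p_2},\frac{q_3}{p_3})$ ($(p_i,q_i)$ coprime, $p_i\ge1$) is the closed Seifert manifold obtained from $S_{0,3}\times S^1$ by gluing solid tori whose meridians are $p_ic_i+q_ih_i$; $e(M)=\sum_iq_i/p_i$; $\pi_1(M)=\langle c_1,c_2,c_3,h\mid [c_i,h]=1=c_i^{p_i}h^{q_i},\ c_1c_2c_3=1\rangle$. Integers $p_1,p_2,p_3$ are weakly coprime if one of them is coprime with each of the other two. An abelian character is the trace of a diagonal representation $\pi_1(M)\to\mathrm{SL}_2(\mathbb{C})$; it is exceptional if it is the trace of a representation $\rho$ with $\rho(h)=\pm I$ and $\rho(c_i)\neq\pm I$ for $i=1,2,3$; $x_M$ is the number of exceptional abelian characters. *)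

theory Defs
  imports "HOL-Analysis.Analysis"
begin

text \<open>Generators of pi_1(M) for M = M(S^2; q1/p1, q2/p2, q3/p3):
  pi_1(M) = < c1, c2, c3, h | [ci,h] = 1 = ci^pi h^qi, c1 c2 c3 = 1 >.\<close>
datatype gen = c1 | c2 | c3 | hgen

text \<open>Group elements are represented by words in the generators and their inverses
  (True = inverse letter).\<close>
type_synonym word = "(gen \<times> bool) list"

type_synonym mat2 = "complex^2^2"

definition mpow :: "mat2 \<Rightarrow> nat \<Rightarrow> mat2" where
  "mpow A n = ((\<lambda>B. A ** B) ^^ n) (mat 1)"

definition mpow_int :: "mat2 \<Rightarrow> int \<Rightarrow> mat2" where
  "mpow_int A k = (if 0 \<le> k then mpow A (nat k) else mpow (matrix_inv A) (nat (- k)))"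

definition tr2 :: "mat2 \<Rightarrow> complex" where
  "tr2 A = A $ 1 $ 1 + A $ 2 $ 2"

definition is_diagonal2 :: "mat2 \<Rightarrow> bool" where
  "is_diagonal2 A \<longleftrightarrow> A $ 1 $ 2 = 0 \<and> A $ 2 $ 1 = 0"

definition sgen :: "nat \<Rightarrow> gen" where
  "sgen i = (if i = 1 then c1 else if i = 2 then c2 else c3)"

definition is_rep :: "(nat \<Rightarrow> nat) \<Rightarrow> (nat \<Rightarrow> int) \<Rightarrow> (gen \<Rightarrow> mat2) \<Rightarrow> bool" where
  "is_rep p q \<rho> \<longleftrightarrow>
     (\<forall>g. det (\<rho> g) = 1) \<and>
     (\<forall>i\<in>{1,2,3}. \<rho> (sgen i) ** \<rho> hgen = \<rho> hgen ** \<rho> (sgen i)) \<and>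
     (\<forall>i\<in>{1,2,3}. mpow (\<rho> (sgen i)) (p i) ** mpow_int (\<rho> hgen) (q i) = mat 1) \<and>
     \<rho> c1 ** \<rho> c2 ** \<rho> c3 = mat 1"

definition eval_word :: "(gen \<Rightarrow> mat2) \<Rightarrow> word \<Rightarrow> mat2" where
  "eval_word \<rho> w = foldr (\<lambda>(g, inv) B. (if inv then matrix_inv (\<rho> g) else \<rho> g) ** B) w (mat 1)"

definition character :: "(gen \<Rightarrow> mat2) \<Rightarrow> word \<Rightarrow> complex" where
  "character \<rho> = (\<lambda>w. tr2 (eval_word \<rho> w))"

definition abelian_character :: "(nat \<Rightarrow> nat) \<Rightarrow> (nat \<Rightarrow> int) \<Rightarrow> (word \<Rightarrow> complex) \<Rightarrow> bool" where
  "abelian_character p q \<psi> \<longleftrightarrow>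
     (\<exists>\<rho>. is_rep p q \<rho> \<and> (\<forall>g. is_diagonal2 (\<rho> g)) \<and> \<psi> = character \<rho>)"

definition exceptional_abelian_character ::
  "(nat \<Rightarrow> nat) \<Rightarrow> (nat \<Rightarrow> int) \<Rightarrow> (word \<Rightarrow> complex) \<Rightarrow> bool" where
  "exceptional_abelian_character p q \<psi> \<longleftrightarrow>
     abelian_character p q \<psi> \<and>
     (\<exists>\<rho>. is_rep p q \<rho> \<and> \<psi> = character \<rho> \<and>
          (\<rho> hgen = mat 1 \<or> \<rho> hgen = - mat 1) \<and>
          (\<forall>i\<in>{1,2,3}. \<rho> (sgen i) \<noteq> mat 1 \<and> \<rho> (sgen i) \<noteq> - mat 1))"

definition xM :: "(nat \<Rightarrow> nat) \<Rightarrow> (nat \<Rightarrow> int) \<Rightarrow> nat" where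
  "xM p q = card {\<psi>. exceptional_abelian_character p q \<psi>}"

text \<open>H_1(M;Z) is the abelianization of pi_1(M), i.e. Z^4 (coordinates c1,c2,c3,h)
  modulo the lattice spanned by the abelianized relators
  p_i c_i + q_i h (i=1,2,3) and c1+c2+c3 (the commutator relators give 0).\<close>
definition abelianize :: "word \<Rightarrow> int \<times> int \<times> int \<times> int" where
  "abelianize w = foldr (\<lambda>(g, inv) (a1, a2, a3, b).
      let s = (if inv then -1 else 1) in
      (case g of c1 \<Rightarrow> (a1 + s, a2, a3, b) | c2 \<Rightarrow> (a1, a2 + s, a3, b)
               | c3 \<Rightarrow> (a1, a2, a3 + s, b) | hgen \<Rightarrow> (a1, a2, a3, b + s))) w (0, 0, 0, 0)"

definition relation_lattice :: "(nat \<Rightarrow> nat) \<Rightarrow> (nat \<Rightarrow> int) \<Rightarrow> (int \<times> int \<times> int \<times> int) set" where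
  "relation_lattice p q = {(x1 * int (p 1) + y, x2 * int (p 2) + y, x3 * int (p 3) + y,
                            x1 * q 1 + x2 * q 2 + x3 * q 3) | x1 x2 x3 y. True}"

definition H1_exponent_two :: "(nat \<Rightarrow> nat) \<Rightarrow> (nat \<Rightarrow> int) \<Rightarrow> bool" where
  "H1_exponent_two p q \<longleftrightarrow> (\<forall>w. abelianize (w @ w) \<in> relation_lattice p q)"

definition weakly_coprime :: "nat \<Rightarrow> nat \<Rightarrow> nat \<Rightarrow> bool" where
  "weakly_coprime a b c \<longleftrightarrow>
     (coprime a b \<and> coprime a c) \<or> (coprime b a \<and> coprime b c) \<or> (coprime c a \<and> coprime c b)"

definition euler_number :: "(nat \<Rightarrow> nat) \<Rightarrow> (nat \<Rightarrow> int) \<Rightarrow> rat" where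
  "euler_number p q = (\<Sum>i\<in>{1,2,3}. of_int (q i) / of_nat (p i))"

end

theory Submission
  imports Defs
begin

text \<open>Let \<open>\<rho>'\<close> be an exceptional representation and \<open>\<rho>\<close> a diagonal one with the same
  character; the upper left entry of \<open>\<rho>\<close> is a homomorphism \<open>\<mu> : \<pi>\<^sub>1(M) \<rightarrow> \<complex>\<^sup>*\<close> with
  \<open>tr \<rho>'(g) = \<mu>(g) + \<mu>(g)\<^sup>-\<^sup>1\<close>. Since \<open>\<rho>'(h) = \<plusminus>I\<close>, \<open>\<mu>(h) = \<plusminus>1\<close>. If some \<open>\<mu>(c\<^sub>i) = \<plusminus>1\<close>, then
  \<open>\<rho>'(c\<^sub>i)\<close> has trace \<open>\<plusminus>2\<close>, so it is \<open>\<plusminus>\<close> a unipotent matrix, and the relation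
  \<open>\<rho>'(c\<^sub>i) ^ p\<^sub>i = \<rho>'(h) ^ (-q\<^sub>i) = \<plusminus>I\<close> forces \<open>\<rho>'(c\<^sub>i) = \<plusminus>I\<close>, which is excluded. So all \<open>\<mu>(c\<^sub>i)\<^sup>2 \<noteq> 1\<close>.
  On the other hand \<open>\<mu>\<close> factors through \<open>H\<^sub>1(M)\<close>, so \<open>\<mu>(c\<^sub>1)\<^sup>2 = 1\<close> if \<open>H\<^sub>1(M)\<close> has exponent 2;
  and if \<open>p\<^sub>1\<close> is coprime to \<open>p\<^sub>2, p\<^sub>3\<close>, then from \<open>(\<mu>(c\<^sub>i)\<^sup>2) ^ p\<^sub>i = (\<mu>(h)\<^sup>2) ^ (-q\<^sub>i) = 1\<close> and
  \<open>\<mu>(c\<^sub>1)\<mu>(c\<^sub>2)\<mu>(c\<^sub>3) = 1\<close> we get \<open>\<mu>(c\<^sub>1)\<^sup>2 = 1\<close>.\<close>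

definition diag2 :: "complex \<Rightarrow> complex \<Rightarrow> mat2" where
  "diag2 a b = (\<chi> i j. if i = j then (if i = 1 then a else b) else 0)"

lemma diag2_nth [simp]:
  "diag2 a b $ 1 $ 1 = a" "diag2 a b $ 2 $ 2 = b" "diag2 a b $ 1 $ 2 = 0" "diag2 a b $ 2 $ 1 = 0"
  by (simp_all add: diag2_def)

lemma mat2_eq_iff:
  "(A :: mat2) = B \<longleftrightarrow> A$1$1 = B$1$1 \<and> A$1$2 = B$1$2 \<and> A$2$1 = B$2$1 \<and> A$2$2 = B$2$2"
  by (auto simp: vec_eq_iff forall_2)

lemma mat2_mult_nth: "((A :: mat2) ** B) $ i $ j = A$i$1 * B$1$j + A$i$2 * B$2$j"
  by (simp add: matrix_matrix_mult_def sum_2)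

lemma mat2_one_nth: "(mat 1 :: mat2) $ i $ j = (if i = j then 1 else 0)"
  by (simp add: mat_def)

lemma mat_one_eq_diag2: "mat 1 = diag2 1 1"
  by (simp add: mat2_eq_iff mat2_one_nth)

lemma uminus_diag2: "- diag2 a b = diag2 (- a) (- b)"
  by (simp add: mat2_eq_iff)

lemma diag2_eq_iff: "diag2 a b = diag2 c d \<longleftrightarrow> a = c \<and> b = d"
  by (simp add: mat2_eq_iff)

lemma diag2_mult: "diag2 a b ** diag2 c d = diag2 (a * c) (b * d)"
  by (simp add: mat2_eq_iff mat2_mult_nth)

lemma det_diag2: "det (diag2 a b) = a * b"
  by (simp add: det_2)

lemma tr2_diag2: "tr2 (diag2 a b) = a + b"
  by (simp add: tr2_def)

lemma is_diagonal2_iff: "is_diagonal2 A \<longleftrightarrow> A = diag2 (A$1$1) (A$2$2)"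
  by (auto simp: is_diagonal2_def mat2_eq_iff)

lemma mpow_0 [simp]: "mpow A 0 = mat 1"
  by (simp add: mpow_def)

lemma mpow_Suc: "mpow A (Suc n) = A ** mpow A n"
  by (simp add: mpow_def)

lemma mpow_diag2: "mpow (diag2 a b) n = diag2 (a ^ n) (b ^ n)"
  by (induction n) (simp_all add: mpow_Suc diag2_mult mat_one_eq_diag2)

lemma matrix_inv_eqI:
  fixes A B :: "'a::comm_semiring_1^'n^'n"
  assumes "A ** B = mat 1" "B ** A = mat 1"
  shows "matrix_inv A = B"
proof -
  let ?C = "matrix_inv A"
  have C: "A ** ?C = mat 1 \<and> ?C ** A = mat 1"
    unfolding matrix_inv_def by (rule someI[of _ B]) (use assms in auto)
  have "?C = ?C ** (A ** B)" using assms by simp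
  also have "\<dots> = (?C ** A) ** B" by (simp add: matrix_mul_assoc)
  also have "\<dots> = B" using C by simp
  finally show ?thesis .
qed

lemma matrix_inv_diag2: "a * b = 1 \<Longrightarrow> matrix_inv (diag2 a b) = diag2 b a"
  by (rule matrix_inv_eqI) (simp_all add: diag2_mult mat_one_eq_diag2 mult.commute)

lemma mpow_int_diag2:
  assumes "a * b = 1"
  shows "mpow_int (diag2 a b) k = diag2 (a powi k) (b powi k)"
proof -
  have "inverse a = b" "inverse b = a"
    using assms by (simp_all add: inverse_unique mult.commute)
  then show ?thesis
    using assms by (simp add: mpow_int_def matrix_inv_diag2 mpow_diag2 power_int_def)
qed

lemma mpow_int_pm_one:
  assumes "H = mat 1 \<or> H = - mat 1"
  shows "mpow_int H k = mat 1 \<or> mpow_int H k = - mat 1"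
proof -
  have "(-1 :: complex) powi k = 1 \<or> (-1 :: complex) powi k = -1"
    by (simp add: power_int_minus_left)
  then show ?thesis
    using assms by (auto simp: mat_one_eq_diag2 uminus_diag2 mpow_int_diag2 diag2_eq_iff)
qed

lemma cayley_hamilton2:
  fixes A :: mat2
  shows "(A ** A) $ i $ j = tr2 A * A $ i $ j - det A * mat 1 $ i $ j"
  using exhaust_2[of i] exhaust_2[of j]
  by (auto simp: mat2_mult_nth mat2_one_nth tr2_def det_2 algebra_simps)

text \<open>By Cayley-Hamilton \<open>A = s(I + N)\<close> with \<open>N\<^sup>2 = 0\<close>, hence \<open>A\<^sup>n = s\<^sup>n(I + nN)\<close>.\<close>
lemma mpow_trace_pm2:
  fixes A :: mat2
  assumes "det A = 1" "tr2 A = 2 * s" "s\<^sup>2 = 1"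
  shows "mpow A n $ i $ j = s ^ n * ((1 - of_nat n) * mat 1 $ i $ j + of_nat n * s * A $ i $ j)"
proof (induction n arbitrary: i j)
  case 0
  show ?case by simp
next
  case (Suc n)
  have s_s: "s * (s * x) = x" for x
    using assms(3) by (simp add: mult.assoc[symmetric] power2_eq_square)
  have "mpow A (Suc n) $ i $ j = s ^ n * ((1 - of_nat n) * A $ i $ j + of_nat n * s * (A ** A) $ i $ j)"
    using exhaust_2[of j]
    by (auto simp: mpow_Suc mat2_mult_nth Suc.IH mat2_one_nth algebra_simps)
  also have "\<dots> = s ^ Suc n * ((1 - of_nat (Suc n)) * mat 1 $ i $ j + of_nat (Suc n) * s * A $ i $ j)"
    using assms by (simp add: cayley_hamilton2 s_s algebra_simps)
  finally show ?case .
qed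

lemma sl2_trace_pm2_root_of_pm_one:
  fixes A :: mat2
  assumes "det A = 1" "tr2 A = 2 * s" "s = 1 \<or> s = -1" "p \<ge> 1"
    and "mpow A p = mat 1 \<or> mpow A p = - mat 1"
  shows "A = mat 1 \<or> A = - mat 1"
proof -
  have s2: "s\<^sup>2 = 1" using assms(3) by auto
  obtain e where e: "mpow A p = diag2 e e"
    using assms(5) by (auto simp: mat_one_eq_diag2 uminus_diag2)
  define N where "N = (of_nat p :: complex)"
  have nonzero: "s ^ p * N * s \<noteq> 0" using assms(3,4) by (auto simp: N_def)
  note entry = mpow_trace_pm2[OF assms(1,2) s2, of p, unfolded e, folded N_def]
  have off_diagonal: "A $ 1 $ 2 = 0" "A $ 2 $ 1 = 0"
    using entry[of 1 2] entry[of 2 1] nonzero by (simp_all add: mat2_one_nth)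
  have "s ^ p * N * s * A $ 1 $ 1 = s ^ p * N * s * A $ 2 $ 2"
    using entry[of 1 1] entry[of 2 2] by (simp add: mat2_one_nth algebra_simps)
  then have "A $ 1 $ 1 = A $ 2 $ 2" using nonzero by simp
  moreover have "A $ 1 $ 1 + A $ 2 $ 2 = 2 * s" using assms(2) by (simp add: tr2_def)
  ultimately have "A = diag2 s s" using off_diagonal by (simp add: mat2_eq_iff)
  then show ?thesis using assms(3) by (auto simp: mat_one_eq_diag2 uminus_diag2)
qed

lemma pm_one_mult_self:
  assumes "B = mat 1 \<or> B = - mat 1"
  shows "B ** B = (mat 1 :: mat2)"
  using assms by (auto simp: mat_one_eq_diag2 uminus_diag2 diag2_mult)

lemma exceptional_rep_trace_ne_pm2:
  assumes "is_rep p q \<rho>" "i \<in> {1, 2, 3}" "p i \<ge> 1"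
    and "\<rho> hgen = mat 1 \<or> \<rho> hgen = - mat 1"
    and "\<rho> (sgen i) \<noteq> mat 1" "\<rho> (sgen i) \<noteq> - mat 1"
    and "s = 1 \<or> s = -1"
  shows "tr2 (\<rho> (sgen i)) \<noteq> 2 * s"
proof
  assume trace: "tr2 (\<rho> (sgen i)) = 2 * s"
  let ?A = "mpow (\<rho> (sgen i)) (p i)" and ?B = "mpow_int (\<rho> hgen) (q i)"
  have B: "?B = mat 1 \<or> ?B = - mat 1"
    using assms(4) by (rule mpow_int_pm_one)
  have "?A ** ?B = mat 1"
    using assms(1,2) unfolding is_rep_def by blast
  then have "?A = ?B"
    using pm_one_mult_self[OF B] by (metis matrix_mul_assoc matrix_mul_lid matrix_mul_rid)
  then have "\<rho> (sgen i) = mat 1 \<or> \<rho> (sgen i) = - mat 1"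
    using sl2_trace_pm2_root_of_pm_one[OF _ trace assms(7,3)] B assms(1) by (simp add: is_rep_def)
  then show False using assms(5,6) by blast
qed

lemma character_letter: "character \<rho> [(g, False)] = tr2 (\<rho> g)"
  by (simp add: character_def eval_word_def)

definition is_scalar_rep :: "(nat \<Rightarrow> nat) \<Rightarrow> (nat \<Rightarrow> int) \<Rightarrow> (gen \<Rightarrow> complex) \<Rightarrow> bool" where
  "is_scalar_rep p q \<mu> \<longleftrightarrow>
     (\<forall>g. \<mu> g \<noteq> 0) \<and> \<mu> c1 * \<mu> c2 * \<mu> c3 = 1 \<and>
     (\<forall>i\<in>{1, 2, 3}. \<mu> (sgen i) ^ p i * \<mu> hgen powi q i = 1)"

lemma diagonal_rep_eq_diag2:
  assumes "is_rep p q \<rho>" "is_diagonal2 (\<rho> g)"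
  shows "\<rho> g $ 1 $ 1 \<noteq> 0" "\<rho> g = diag2 (\<rho> g $ 1 $ 1) (inverse (\<rho> g $ 1 $ 1))"
proof -
  have "\<rho> g $ 1 $ 1 * \<rho> g $ 2 $ 2 = 1"
    using assms by (metis is_rep_def is_diagonal2_iff det_diag2)
  then show "\<rho> g $ 1 $ 1 \<noteq> 0" "\<rho> g = diag2 (\<rho> g $ 1 $ 1) (inverse (\<rho> g $ 1 $ 1))"
    using assms(2) by (auto simp: is_diagonal2_iff inverse_unique)
qed

lemma diagonal_rep_scalar_rep:
  assumes "is_rep p q \<rho>" "\<forall>g. is_diagonal2 (\<rho> g)"
  shows "is_scalar_rep p q (\<lambda>g. \<rho> g $ 1 $ 1)"
proof -
  define \<mu> where "\<mu> g = \<rho> g $ 1 $ 1" for g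
  have nonzero: "\<mu> g \<noteq> 0" and diag: "\<rho> g = diag2 (\<mu> g) (inverse (\<mu> g))" for g
    using diagonal_rep_eq_diag2[OF assms(1)] assms(2) by (simp_all add: \<mu>_def)
  have "\<mu> c1 * \<mu> c2 * \<mu> c3 = 1"
    using assms(1) diag[of c1] diag[of c2] diag[of c3]
    by (simp add: is_rep_def diag2_mult mat_one_eq_diag2 diag2_eq_iff)
  moreover have "\<mu> (sgen i) ^ p i * \<mu> hgen powi q i = 1" if "i \<in> {1, 2, 3}" for i
  proof -
    have "mpow (\<rho> (sgen i)) (p i) ** mpow_int (\<rho> hgen) (q i) = mat 1"
      using assms(1) that unfolding is_rep_def by blast
    then show ?thesis
      using nonzero[of hgen] unfolding diag[of "sgen i"] diag[of hgen]
      by (simp add: mpow_diag2 mpow_int_diag2 diag2_mult mat_one_eq_diag2 diag2_eq_iff)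
  qed
  ultimately show ?thesis
    using nonzero by (simp add: is_scalar_rep_def \<mu>_def)
qed

lemma add_inverse_eq_pm2_iff:
  fixes x s :: complex
  assumes "x \<noteq> 0" "s = 1 \<or> s = -1"
  shows "x + inverse x = 2 * s \<longleftrightarrow> x = s"
proof -
  have "x + inverse x = 2 * s \<longleftrightarrow> (x - s)\<^sup>2 = 0"
    using assms by (auto simp: field_simps power2_eq_square)
  then show ?thesis by simp
qed

lemma exceptional_abelian_character_scalar_rep:
  assumes "\<forall>i\<in>{1, 2, 3}. p i \<ge> 1" "exceptional_abelian_character p q \<psi>"
  obtains \<mu> where "is_scalar_rep p q \<mu>" "(\<mu> hgen)\<^sup>2 = 1" "\<forall>i\<in>{1, 2, 3}. (\<mu> (sgen i))\<^sup>2 \<noteq> 1"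
proof -
  obtain \<rho> \<rho>' where rep: "is_rep p q \<rho>" and diagonal: "\<forall>g. is_diagonal2 (\<rho> g)"
    and rep': "is_rep p q \<rho>'" and same_character: "character \<rho> = character \<rho>'"
    and central: "\<rho>' hgen = mat 1 \<or> \<rho>' hgen = - mat 1"
    and noncentral: "\<forall>i\<in>{1, 2, 3}. \<rho>' (sgen i) \<noteq> mat 1 \<and> \<rho>' (sgen i) \<noteq> - mat 1"
    using assms(2) unfolding exceptional_abelian_character_def abelian_character_def by metis
  define \<mu> where "\<mu> g = \<rho> g $ 1 $ 1" for g
  have scalar: "is_scalar_rep p q \<mu>"
    unfolding \<mu>_def using rep diagonal by (rule diagonal_rep_scalar_rep)
  have trace: "tr2 (\<rho>' g) = \<mu> g + inverse (\<mu> g)" for g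
    using same_character character_letter[of \<rho> g] character_letter[of \<rho>' g]
      diagonal_rep_eq_diag2(2)[OF rep diagonal[rule_format, of g]]
    by (metis \<mu>_def tr2_diag2)
  have pm_one_iff: "(\<mu> g)\<^sup>2 = 1 \<longleftrightarrow> (\<exists>s. (s = 1 \<or> s = -1) \<and> tr2 (\<rho>' g) = 2 * s)" for g
    using add_inverse_eq_pm2_iff scalar unfolding trace is_scalar_rep_def power2_eq_1_iff
    by (metis (lifting))
  have "(\<mu> hgen)\<^sup>2 = 1"
    using central unfolding pm_one_iff by (auto simp: tr2_def mat2_one_nth)
  moreover have "(\<mu> (sgen i))\<^sup>2 \<noteq> 1" if "i \<in> {1, 2, 3}" for i
    using exceptional_rep_trace_ne_pm2[OF rep' that] that assms(1) noncentral central
    unfolding pm_one_iff by blast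
  ultimately show ?thesis using scalar that by blast
qed

definition eval_H1 :: "(gen \<Rightarrow> complex) \<Rightarrow> int \<times> int \<times> int \<times> int \<Rightarrow> complex" where
  "eval_H1 \<mu> = (\<lambda>(a1, a2, a3, b). \<mu> c1 powi a1 * \<mu> c2 powi a2 * \<mu> c3 powi a3 * \<mu> hgen powi b)"

lemma eval_H1_relation_lattice:
  assumes "is_scalar_rep p q \<mu>" "v \<in> relation_lattice p q"
  shows "eval_H1 \<mu> v = 1"
proof -
  obtain x1 x2 x3 y where v: "v = (x1 * int (p 1) + y, x2 * int (p 2) + y, x3 * int (p 3) + y,
      x1 * q 1 + x2 * q 2 + x3 * q 3)"
    using assms(2) by (auto simp: relation_lattice_def)
  have nonzero: "\<mu> g \<noteq> 0" for g
    using assms(1) by (simp add: is_scalar_rep_def)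
  have fibre: "\<mu> (sgen i) ^ p i * \<mu> hgen powi q i = 1" if "i \<in> {1, 2, 3}" for i
    using assms(1) that unfolding is_scalar_rep_def by blast
  have power_mult: "\<mu> g powi (x * int n) = (\<mu> g ^ n) powi x" for g x n
    by (metis power_int_mult power_int_of_nat mult.commute)
  have "eval_H1 \<mu> v = (\<mu> c1 ^ p 1 * \<mu> hgen powi q 1) powi x1 *
      (\<mu> c2 ^ p 2 * \<mu> hgen powi q 2) powi x2 *
      (\<mu> c3 ^ p 3 * \<mu> hgen powi q 3) powi x3 * (\<mu> c1 * \<mu> c2 * \<mu> c3) powi y"
    using nonzero unfolding v eval_H1_def
    by (simp add: power_int_add power_int_mult_distrib power_mult power_int_mult[symmetric] mult_ac)
  also have "\<dots> = 1"
    using fibre[of 1] fibre[of 2] fibre[of 3] assms(1) by (simp add: sgen_def is_scalar_rep_def)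
  finally show ?thesis .
qed

lemma H1_exponent_two_scalar_rep_square:
  assumes "H1_exponent_two p q" "is_scalar_rep p q \<mu>"
  shows "(\<mu> g)\<^sup>2 = 1"
proof -
  have "eval_H1 \<mu> (abelianize ([(g, False)] @ [(g, False)])) = 1"
    using assms unfolding H1_exponent_two_def by (blast intro: eval_H1_relation_lattice)
  then show ?thesis
    by (cases g) (simp_all add: abelianize_def eval_H1_def)
qed

lemma power_gcd_eq_one:
  fixes x :: "'a::monoid_mult"
  assumes "x ^ m = 1" "x ^ n = 1"
  shows "x ^ gcd m n = 1"
proof (cases "m = 0")
  case True
  then show ?thesis using assms(2) by simp
next
  case False
  then obtain u v where "m * u = n * v + gcd m n"
    using bezout_nat by blast
  then have "x ^ (m * u) = (x ^ n) ^ v * x ^ gcd m n"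
    by (simp add: power_add power_mult)
  then show ?thesis using assms by (simp add: power_mult)
qed

lemma coprime_exponents_prod_eq_one:
  fixes x y z :: "'a::comm_monoid_mult"
  assumes "x ^ a = 1" "y ^ b = 1" "z ^ c = 1" "x * y * z = 1" "coprime a b" "coprime a c"
  shows "x = 1"
proof -
  have "(x * y * z) ^ (b * c) = x ^ (b * c) * (y ^ b) ^ c * (z ^ c) ^ b"
    by (simp add: power_mult_distrib power_mult[symmetric] mult.commute)
  then have "x ^ (b * c) = (x * y * z) ^ (b * c)"
    using assms(2,3) by simp
  then have "x ^ (b * c) = 1" using assms(4) by simp
  with assms(1) have "x ^ gcd a (b * c) = 1" by (rule power_gcd_eq_one)
  then show ?thesis using assms(5,6) by simp
qed

lemma weakly_coprime_scalar_rep_square: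
  assumes "weakly_coprime (p 1) (p 2) (p 3)" "is_scalar_rep p q \<mu>" "(\<mu> hgen)\<^sup>2 = 1"
  shows "\<exists>i\<in>{1, 2, 3}. (\<mu> (sgen i))\<^sup>2 = 1"
proof -
  define x where "x i = (\<mu> (sgen i))\<^sup>2" for i
  have "x i ^ p i = 1" if "i \<in> {1, 2, 3}" for i
  proof -
    have "\<mu> (sgen i) ^ p i * \<mu> hgen powi q i = 1"
      using assms(2) that unfolding is_scalar_rep_def by blast
    then have "(\<mu> (sgen i) ^ p i * \<mu> hgen powi q i)\<^sup>2 = 1" by simp
    then have "x i ^ p i * ((\<mu> hgen)\<^sup>2) powi q i = 1"
      by (simp add: x_def power_mult_distrib power_int_power power_int_power' mult.commute
          flip: power_mult)
    then show ?thesis using assms(3) by simp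
  qed
  moreover have "x 1 * x 2 * x 3 = 1"
    using assms(2) by (simp add: x_def sgen_def is_scalar_rep_def flip: power_mult_distrib)
  ultimately show ?thesis
    using assms(1) coprime_exponents_prod_eq_one[of "x 1" "p 1" "x 2" "p 2" "x 3" "p 3"]
      coprime_exponents_prod_eq_one[of "x 2" "p 2" "x 1" "p 1" "x 3" "p 3"]
      coprime_exponents_prod_eq_one[of "x 3" "p 3" "x 1" "p 1" "x 2" "p 2"]
    unfolding weakly_coprime_def x_def by (auto simp: mult_ac)
qed

theorem proposition5p5:
  fixes p :: "nat \<Rightarrow> nat" and q :: "nat \<Rightarrow> int"
  assumes "\<forall>i\<in>{1,2,3}. p i \<ge> 1 \<and> coprime (int (p i)) (q i)"
    and "euler_number p q \<noteq> 0"
    and "H1_exponent_two p q \<or> weakly_coprime (p 1) (p 2) (p 3)"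
  shows "{\<psi>. exceptional_abelian_character p q \<psi>} = {} \<and> xM p q = 0"
proof -
  have p_pos: "\<forall>i\<in>{1, 2, 3}. p i \<ge> 1" using assms(1) by blast
  have "\<not> exceptional_abelian_character p q \<psi>" for \<psi>
  proof
    assume "exceptional_abelian_character p q \<psi>"
    with p_pos obtain \<mu> where scalar: "is_scalar_rep p q \<mu>" and "(\<mu> hgen)\<^sup>2 = 1"
      and noncentral: "\<forall>i\<in>{1, 2, 3}. (\<mu> (sgen i))\<^sup>2 \<noteq> 1"
      by (rule exceptional_abelian_character_scalar_rep)
    then have "\<exists>i\<in>{1, 2, 3}. (\<mu> (sgen i))\<^sup>2 = 1"
      using assms(3) H1_exponent_two_scalar_rep_square weakly_coprime_scalar_rep_square by blast
    with noncentral show False by blast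
  qed
  then show ?thesis by (simp add: xM_def)
qed

end
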